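(* Let $q\ge 7$ and $s\in[1,7]$ be integers, $C$ a finite set with $|C|=2q+s$, and $M\in\mathcal M(6,q,C)$. Suppose the maximum degree of the graph $G$ associated with $M$ equals $3$, $\{i,j,k,l,m,n\}=\{1,\dots,6\}$, and $r(i,l)\ge1$, $r(j,l)\ge1$, $r(k,l)\ge1$. Then $r(l,m,n)\ge q+3s-24$.
   Context: $\mathcal M(6,q,C)$ is the set of $6\times q$ matrices $M$ with entries from $C$ such that each row has $q$ pairwise distinct entries, each column has $6$ pairwise distinct entries, and every pair of distinct colours of $C$ appears together in some row or some column of $M$. The frequency of a colour is the number of entries of $M$ equal to it. For rows $a\ne b$, $r(a,b)$ is the number of colours of frequency exactly $2$ appearing in both row $a$ and row $b$; for distinct rows $a,b,c$, $r(a,b,c)$ is the number of colours of frequency exactly $3$ appearing in each of rows $a,b,c$. The graph $G$ associated with $M$ has vertex set $\{1,\dots,6\}$, with $\{a,b\}$ an edge iff $r(a,b)\ge 1$. *)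

theory Defs
  imports Main
begin

text \<open>A 6 x q matrix with entries from a colour set C is a function M :: nat => nat => 'c,
  with rows indexed by 1..6 and columns by 1..q.\<close>

definition rows6 :: "nat set" where "rows6 = {1..6}"

definition row_set :: "(nat \<Rightarrow> nat \<Rightarrow> 'c) \<Rightarrow> nat \<Rightarrow> nat \<Rightarrow> 'c set" where
  "row_set M q a = (\<lambda>b. M a b) ` {1..q}"

definition col_set :: "(nat \<Rightarrow> nat \<Rightarrow> 'c) \<Rightarrow> nat \<Rightarrow> 'c set" where
  "col_set M b = (\<lambda>a. M a b) ` rows6"

definition in_M6 :: "nat \<Rightarrow> 'c set \<Rightarrow> (nat \<Rightarrow> nat \<Rightarrow> 'c) \<Rightarrow> bool" where
  "in_M6 q C M \<longleftrightarrow>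
     (\<forall>a\<in>rows6. \<forall>b\<in>{1..q}. M a b \<in> C) \<and>
     (\<forall>a\<in>rows6. inj_on (\<lambda>b. M a b) {1..q}) \<and>
     (\<forall>b\<in>{1..q}. inj_on (\<lambda>a. M a b) rows6) \<and>
     (\<forall>x\<in>C. \<forall>y\<in>C. x \<noteq> y \<longrightarrow>
        (\<exists>a\<in>rows6. x \<in> row_set M q a \<and> y \<in> row_set M q a) \<or>
        (\<exists>b\<in>{1..q}. x \<in> col_set M b \<and> y \<in> col_set M b))"

definition freq :: "(nat \<Rightarrow> nat \<Rightarrow> 'c) \<Rightarrow> nat \<Rightarrow> 'c \<Rightarrow> nat" where
  "freq M q x = card {(a, b). a \<in> rows6 \<and> b \<in> {1..q} \<and> M a b = x}"

definition r2 :: "(nat \<Rightarrow> nat \<Rightarrow> 'c) \<Rightarrow> nat \<Rightarrow> nat \<Rightarrow> nat \<Rightarrow> nat" where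
  "r2 M q a b = card {x. freq M q x = 2 \<and> x \<in> row_set M q a \<and> x \<in> row_set M q b}"

definition r3 :: "(nat \<Rightarrow> nat \<Rightarrow> 'c) \<Rightarrow> nat \<Rightarrow> nat \<Rightarrow> nat \<Rightarrow> nat \<Rightarrow> nat" where
  "r3 M q a b c = card {x. freq M q x = 3 \<and> x \<in> row_set M q a \<and> x \<in> row_set M q b
                          \<and> x \<in> row_set M q c}"

definition G_adj :: "(nat \<Rightarrow> nat \<Rightarrow> 'c) \<Rightarrow> nat \<Rightarrow> nat \<Rightarrow> nat \<Rightarrow> bool" where
  "G_adj M q a b \<longleftrightarrow> a \<in> rows6 \<and> b \<in> rows6 \<and> a \<noteq> b \<and> r2 M q a b \<ge> 1"

definition G_degree :: "(nat \<Rightarrow> nat \<Rightarrow> 'c) \<Rightarrow> nat \<Rightarrow> nat \<Rightarrow> nat" where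
  "G_degree M q a = card {b \<in> rows6. G_adj M q a b}"

definition G_max_degree :: "(nat \<Rightarrow> nat \<Rightarrow> 'c) \<Rightarrow> nat \<Rightarrow> nat" where
  "G_max_degree M q = Max (G_degree M q ` rows6)"

end

theory Submission
  imports Defs
begin

(*
  If a colour x occurs exactly in the rows of a set A, every other colour shares a row or a
  column with x; the columns through x add at most 6 - |A| new colours each and there are at
  most |A| of them, so |C| \<le> |\<Union>{row a | a \<in> A}| + |A| (6 - |A|). With |C| = 2q + s this rules
  out colours of frequency 1, and for every edge ab of G it gives |row a \<inter> row b| \<le> 8 - s.
  Row l has the neighbours i, j, k and, G having maximum degree 3, no others. A colour of
  row l outside rows i, j, k therefore occurs only in rows among l, m, n, and not exactly
  twice (that would make m or n a neighbour of l), so it has frequency 3 and lies in rows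
  l, m, n. Counting row l gives q \<le> 3 (8 - s) + r(l,m,n).
*)

definition rows_containing :: "(nat \<Rightarrow> nat \<Rightarrow> 'c) \<Rightarrow> nat \<Rightarrow> 'c \<Rightarrow> nat set" where
  "rows_containing M q x = {a \<in> rows6. x \<in> row_set M q a}"

lemma finite_rows6 [simp]: "finite rows6"
  and card_rows6 [simp]: "card rows6 = 6"
  by (simp_all add: rows6_def)

lemma finite_row_set [simp]: "finite (row_set M q a)"
  by (simp add: row_set_def)

lemma rows_containing_subset: "rows_containing M q x \<subseteq> rows6"
  by (auto simp: rows_containing_def)

lemma finite_rows_containing [simp]: "finite (rows_containing M q x)"
  using rows_containing_subset by (rule finite_subset) simp

lemma in_M6_inj_row:
  assumes "in_M6 q C M" and "a \<in> rows6"
  shows "inj_on (\<lambda>b. M a b) {1..q}"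
  using assms unfolding in_M6_def by simp

lemma in_M6_row_set_subset:
  assumes "in_M6 q C M" and "a \<in> rows6"
  shows "row_set M q a \<subseteq> C"
  using assms unfolding in_M6_def row_set_def by auto

lemma in_M6_card_row_set:
  assumes "in_M6 q C M" and "a \<in> rows6"
  shows "card (row_set M q a) = q"
  unfolding row_set_def using card_image[OF in_M6_inj_row[OF assms]] by simp

lemma in_M6_shares_line:
  assumes "in_M6 q C M" and "x \<in> C" and "y \<in> C" and "x \<noteq> y"
  shows "(\<exists>a\<in>rows6. x \<in> row_set M q a \<and> y \<in> row_set M q a)
    \<or> (\<exists>c\<in>{1..q}. x \<in> col_set M c \<and> y \<in> col_set M c)"
  using assms unfolding in_M6_def by blast

lemma in_M6_freq_eq_card_rows_containing:
  assumes "in_M6 q C M"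
  shows "freq M q x = card (rows_containing M q x)"
proof -
  let ?P = "{(a, b). a \<in> rows6 \<and> b \<in> {1..q} \<and> M a b = x}"
  have inj: "inj_on fst ?P"
  proof (rule inj_onI)
    fix u v assume u: "u \<in> ?P" and v: "v \<in> ?P" and "fst u = fst v"
    then obtain a b b' where uv: "u = (a, b)" "v = (a, b')"
      by (metis prod.collapse)
    with u v have "a \<in> rows6" "M a b = M a b'" "b \<in> {1..q}" "b' \<in> {1..q}"
      by auto
    then have "b = b'"
      using in_M6_inj_row[OF assms] by (meson inj_onD)
    with uv show "u = v"
      by simp
  qed
  have img: "fst ` ?P = rows_containing M q x"
  proof (intro equalityI subsetI)
    fix a assume "a \<in> rows_containing M q x"
    then obtain b where "a \<in> rows6" "b \<in> {1..q}" "M a b = x"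
      unfolding rows_containing_def row_set_def by auto
    then show "a \<in> fst ` ?P"
      by (auto intro: image_eqI[of _ _ "(a, b)"])
  qed (auto simp: rows_containing_def row_set_def)
  show ?thesis
    unfolding freq_def using card_image[OF inj] img by simp
qed

lemma card_cols_containing_le_freq: "card {c \<in> {1..q}. x \<in> col_set M c} \<le> freq M q x"
proof -
  let ?P = "{(a, b). a \<in> rows6 \<and> b \<in> {1..q} \<and> M a b = x}"
  have "finite ?P"
    by (rule finite_subset[of _ "rows6 \<times> {1..q}"]) auto
  moreover have "{c \<in> {1..q}. x \<in> col_set M c} \<subseteq> snd ` ?P"
  proof
    fix c assume "c \<in> {c \<in> {1..q}. x \<in> col_set M c}"
    then obtain r where "r \<in> rows6" "M r c = x" "c \<in> {1..q}"
      unfolding col_set_def by auto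
    then show "c \<in> snd ` ?P"
      by (auto intro: image_eqI[of _ _ "(r, c)"])
  qed
  ultimately show ?thesis
    unfolding freq_def by (meson card_image_le card_mono finite_imageI order_trans)
qed

lemma in_M6_subset_rows_Un_cols:
  assumes M: "in_M6 q C M" and "a\<^sub>0 \<in> rows6" and "x \<in> row_set M q a\<^sub>0"
  defines "A \<equiv> rows_containing M q x"
  shows "C \<subseteq> (\<Union>a\<in>A. row_set M q a) \<union>
    (\<Union>c\<in>{c \<in> {1..q}. x \<in> col_set M c}. (\<lambda>r. M r c) ` (rows6 - A))"
proof
  fix y assume "y \<in> C"
  have "x \<in> C"
    using in_M6_row_set_subset[OF M \<open>a\<^sub>0 \<in> rows6\<close>] \<open>x \<in> row_set M q a\<^sub>0\<close> by blast
  consider "y = x"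
    | (row) a where "a \<in> rows6" "x \<in> row_set M q a" "y \<in> row_set M q a"
    | (col) c where "c \<in> {1..q}" "x \<in> col_set M c" "y \<in> col_set M c"
    using in_M6_shares_line[OF M \<open>x \<in> C\<close> \<open>y \<in> C\<close>] by blast
  then show "y \<in> (\<Union>a\<in>A. row_set M q a) \<union>
    (\<Union>c\<in>{c \<in> {1..q}. x \<in> col_set M c}. (\<lambda>r. M r c) ` (rows6 - A))"
  proof cases
    case 1
    then show ?thesis
      using assms(2,3) by (auto simp: A_def rows_containing_def)
  next
    case row
    then show ?thesis
      by (auto simp: A_def rows_containing_def)
  next
    case (col c)
    then obtain r where "r \<in> rows6" "y = M r c"
      unfolding col_set_def by auto
    show ?thesis
    proof (cases "r \<in> A")
      case True
      have "y \<in> row_set M q r"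
        using \<open>y = M r c\<close> col(1) unfolding row_set_def by blast
      with True show ?thesis
        by blast
    next
      case False
      with col \<open>r \<in> rows6\<close> \<open>y = M r c\<close> show ?thesis
        by auto
    qed
  qed
qed

lemma in_M6_card_le:
  assumes M: "in_M6 q C M" and "a\<^sub>0 \<in> rows6" and "x \<in> row_set M q a\<^sub>0"
  defines "A \<equiv> rows_containing M q x"
  shows "card C \<le> card (\<Union>a\<in>A. row_set M q a) + card A * (6 - card A)"
proof -
  define cols where "cols = {c \<in> {1..q}. x \<in> col_set M c}"
  define rest where "rest c = (\<lambda>r. M r c) ` (rows6 - A)" for c
  have rest_le: "card (rest c) \<le> 6 - card A" for c
  proof -
    have "card (rest c) \<le> card (rows6 - A)"
      unfolding rest_def by (rule card_image_le) simp
    then show ?thesis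
      by (simp add: A_def card_Diff_subset rows_containing_subset)
  qed
  have "card C \<le> card ((\<Union>a\<in>A. row_set M q a) \<union> (\<Union>c\<in>cols. rest c))"
    using in_M6_subset_rows_Un_cols[OF assms(1-3)]
    by (intro card_mono) (simp_all add: A_def cols_def rest_def)
  also have "\<dots> \<le> card (\<Union>a\<in>A. row_set M q a) + (\<Sum>c\<in>cols. card (rest c))"
    by (rule order_trans[OF card_Un_le add_left_mono[OF card_UN_le]]) (simp add: cols_def)
  also have "\<dots> \<le> card (\<Union>a\<in>A. row_set M q a) + card cols * (6 - card A)"
    using sum_bounded_above[of cols "\<lambda>c. card (rest c)", OF rest_le] by simp
  also have "\<dots> \<le> card (\<Union>a\<in>A. row_set M q a) + card A * (6 - card A)"
    using card_cols_containing_le_freq[of q x M] in_M6_freq_eq_card_rows_containing[OF M, of x]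
    by (intro add_left_mono mult_le_mono1) (simp add: A_def cols_def)
  finally show ?thesis .
qed

lemma in_M6_freq_ge_2:
  assumes M: "in_M6 q C M" and "q + 5 < card C" and "a \<in> rows6" and "x \<in> row_set M q a"
  shows "2 \<le> freq M q x"
proof (rule ccontr)
  let ?A = "rows_containing M q x"
  assume "\<not> 2 \<le> freq M q x"
  moreover have "a \<in> ?A"
    using assms(3,4) by (simp add: rows_containing_def)
  ultimately have "?A = {a}"
    using in_M6_freq_eq_card_rows_containing[OF M, of x] card_le_Suc0_iff_eq[of ?A] by auto
  then have "card C \<le> q + 5"
    using in_M6_card_le[OF M assms(3,4)] in_M6_card_row_set[OF M assms(3)] by simp
  with assms(2) show False
    by simp
qed

lemma r2_commute: "r2 M q a b = r2 M q b a"
  unfolding r2_def by (simp add: conj_commute)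

lemma one_le_r2_iff:
  "1 \<le> r2 M q a b \<longleftrightarrow> (\<exists>x. freq M q x = 2 \<and> x \<in> row_set M q a \<and> x \<in> row_set M q b)"
proof -
  have "finite {x. freq M q x = 2 \<and> x \<in> row_set M q a \<and> x \<in> row_set M q b}"
    by (rule finite_subset[of _ "row_set M q a"]) auto
  then show ?thesis
    unfolding r2_def by (auto simp: Suc_le_eq card_gt_0_iff)
qed

lemma in_M6_card_Int_row_set_le:
  assumes M: "in_M6 q C M" and "G_adj M q a b"
  shows "card C + card (row_set M q a \<inter> row_set M q b) \<le> 2 * q + 8"
proof -
  have a: "a \<in> rows6" and b: "b \<in> rows6" and "a \<noteq> b"
    using assms(2) by (auto simp: G_adj_def)
  have "1 \<le> r2 M q a b"
    using assms(2) by (simp add: G_adj_def)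
  then obtain x where "freq M q x = 2" and xa: "x \<in> row_set M q a" and "x \<in> row_set M q b"
    unfolding one_le_r2_iff by blast
  then have "rows_containing M q x = {a, b}"
    using in_M6_freq_eq_card_rows_containing[OF M, of x] \<open>a \<noteq> b\<close> a b
    by (intro card_subset_eq[symmetric]) (auto simp: rows_containing_def)
  then have "card C \<le> card (row_set M q a \<union> row_set M q b) + 8"
    using in_M6_card_le[OF M a xa] \<open>a \<noteq> b\<close> by simp
  moreover have "card (row_set M q a \<union> row_set M q b) + card (row_set M q a \<inter> row_set M q b) = 2 * q"
    using card_Un_Int[of "row_set M q a" "row_set M q b"] in_M6_card_row_set[OF M a]
      in_M6_card_row_set[OF M b] by simp
  ultimately show ?thesis
    by linarith
qed

lemma G_degree_le_G_max_degree:
  assumes "a \<in> rows6"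
  shows "G_degree M q a \<le> G_max_degree M q"
  unfolding G_max_degree_def using assms by simp

lemma G_neighbours_eq_if_max_degree_le:
  assumes "G_max_degree M q \<le> card S" and "a \<in> rows6"
    and "S \<subseteq> {b \<in> rows6. G_adj M q a b}"
  shows "{b \<in> rows6. G_adj M q a b} = S"
proof (rule card_seteq[symmetric])
  show "card {b \<in> rows6. G_adj M q a b} \<le> card S"
    using G_degree_le_G_max_degree[OF assms(2), of M q] assms(1) by (simp add: G_degree_def)
qed (use assms(3) in simp_all)

lemma in_M6_obtain_adj_if_freq_2:
  assumes M: "in_M6 q C M" and "a \<in> rows6" and "freq M q x = 2" and "x \<in> row_set M q a"
  obtains b where "b \<in> rows6" and "b \<noteq> a" and "x \<in> row_set M q b" and "G_adj M q a b"
proof -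
  have "card (rows_containing M q x) = 2" and "a \<in> rows_containing M q x"
    using assms in_M6_freq_eq_card_rows_containing[OF M, of x] by (auto simp: rows_containing_def)
  then obtain b where "b \<in> rows_containing M q x" "b \<noteq> a"
    by (metis card_2_iff insertE insert_iff)
  then have "b \<in> rows6" "x \<in> row_set M q b"
    by (auto simp: rows_containing_def)
  moreover have "1 \<le> r2 M q a b"
    unfolding one_le_r2_iff using assms(3,4) \<open>x \<in> row_set M q b\<close> by blast
  ultimately show ?thesis
    using that assms(2) \<open>b \<noteq> a\<close> by (simp add: G_adj_def)
qed

lemma in_M6_row_set_subset_Int_Un_freq_3:
  assumes M: "in_M6 q C M" and "q + 5 < card C"
    and rows: "rows6 = {i, j, k, l, m, n}" and dist: "distinct [i, j, k, l, m, n]"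
    and "\<not> G_adj M q l m" and "\<not> G_adj M q l n"
  shows "row_set M q l \<subseteq>
    (row_set M q l \<inter> row_set M q i) \<union> (row_set M q l \<inter> row_set M q j) \<union>
    (row_set M q l \<inter> row_set M q k) \<union>
    {x. freq M q x = 3 \<and> x \<in> row_set M q l \<and> x \<in> row_set M q m \<and> x \<in> row_set M q n}"
    (is "_ \<subseteq> ?U")
proof
  fix x assume xl: "x \<in> row_set M q l"
  let ?A = "rows_containing M q x"
  have l: "l \<in> rows6"
    unfolding rows by simp
  show "x \<in> ?U"
  proof (rule ccontr)
    assume "x \<notin> ?U"
    with rows xl have A_subset: "?A \<subseteq> {l, m, n}"
      by (auto simp: rows_containing_def)
    have "freq M q x \<noteq> 2"
    proof
      assume "freq M q x = 2"
      then obtain p where "p \<in> rows6" "p \<noteq> l" "x \<in> row_set M q p" "G_adj M q l p"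
        using in_M6_obtain_adj_if_freq_2[OF M l _ xl] by blast
      moreover from calculation have "p \<in> {m, n}"
        using A_subset by (auto simp: rows_containing_def)
      ultimately show False
        using assms(5,6) by blast
    qed
    moreover have "freq M q x \<le> 3"
      using card_mono[OF _ A_subset] card_insert_le[of "{m, n}" l]
        in_M6_freq_eq_card_rows_containing[OF M, of x] dist by simp
    moreover have "2 \<le> freq M q x"
      using in_M6_freq_ge_2[OF M assms(2) l xl] .
    ultimately have freq_3: "freq M q x = 3"
      by linarith
    then have "card ?A = card {l, m, n}"
      using in_M6_freq_eq_card_rows_containing[OF M, of x] dist by simp
    then have "?A = {l, m, n}"
      using A_subset by (intro card_subset_eq) simp_all
    then have "x \<in> row_set M q m" "x \<in> row_set M q n"
      by (auto simp: rows_containing_def)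
    with xl freq_3 \<open>x \<notin> ?U\<close> show False
      by blast
  qed
qed

lemma in_M6_le_card_Int_r3:
  assumes M: "in_M6 q C M" and "q + 5 < card C"
    and rows: "rows6 = {i, j, k, l, m, n}" and dist: "distinct [i, j, k, l, m, n]"
    and "\<not> G_adj M q l m" and "\<not> G_adj M q l n"
  shows "q \<le> card (row_set M q l \<inter> row_set M q i) + card (row_set M q l \<inter> row_set M q j) +
    card (row_set M q l \<inter> row_set M q k) + r3 M q l m n"
proof -
  let ?R = "row_set M q"
  let ?T = "{x. freq M q x = 3 \<and> x \<in> ?R l \<and> x \<in> ?R m \<and> x \<in> ?R n}"
  have "finite ?T"
    by (rule finite_subset[of _ "?R l"]) auto
  have "l \<in> rows6"
    unfolding rows by simp
  then have "q = card (?R l)"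
    using in_M6_card_row_set[OF M] by simp
  also have "\<dots> \<le> card ((?R l \<inter> ?R i) \<union> (?R l \<inter> ?R j) \<union> (?R l \<inter> ?R k) \<union> ?T)"
    using in_M6_row_set_subset_Int_Un_freq_3[OF assms] \<open>finite ?T\<close> by (intro card_mono) simp_all
  also have "\<dots> \<le> card (?R l \<inter> ?R i) + card (?R l \<inter> ?R j) + card (?R l \<inter> ?R k) + card ?T"
    using card_Un_le[of "(?R l \<inter> ?R i) \<union> (?R l \<inter> ?R j) \<union> (?R l \<inter> ?R k)" ?T]
      card_Un_le[of "(?R l \<inter> ?R i) \<union> (?R l \<inter> ?R j)" "?R l \<inter> ?R k"]
      card_Un_le[of "?R l \<inter> ?R i" "?R l \<inter> ?R j"] by linarith
  finally show ?thesis
    unfolding r3_def .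
qed

theorem claim6:
  fixes q s :: nat and C :: "'c set" and M :: "nat \<Rightarrow> nat \<Rightarrow> 'c"
    and i j k l m n :: nat
  assumes "q \<ge> 7" and "1 \<le> s" and "s \<le> 7"
    and "finite C" and "card C = 2 * q + s"
    and "in_M6 q C M"
    and "G_max_degree M q = 3"
    and "{i, j, k, l, m, n} = {1..6}"
    and "r2 M q i l \<ge> 1" and "r2 M q j l \<ge> 1" and "r2 M q k l \<ge> 1"
  shows "int (r3 M q l m n) \<ge> int q + 3 * int s - 24"
proof -
  have rows: "rows6 = {i, j, k, l, m, n}"
    using assms(8) by (simp add: rows6_def)
  have dist: "distinct [i, j, k, l, m, n]"
    using assms(8) by (intro card_distinct) simp
  have adj: "G_adj M q l i" "G_adj M q l j" "G_adj M q l k"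
    using assms(9-11) rows dist by (auto simp: G_adj_def r2_commute)
  have "{b \<in> rows6. G_adj M q l b} = {i, j, k}"
    using dist adj assms(7) rows by (intro G_neighbours_eq_if_max_degree_le) auto
  then have "\<not> G_adj M q l m" "\<not> G_adj M q l n"
    using rows dist by auto
  with assms(1,5,6) rows dist
  have "q \<le> card (row_set M q l \<inter> row_set M q i) + card (row_set M q l \<inter> row_set M q j) +
      card (row_set M q l \<inter> row_set M q k) + r3 M q l m n"
    by (intro in_M6_le_card_Int_r3) auto
  moreover have bound: "card (row_set M q l \<inter> row_set M q p) + s \<le> 8" if "G_adj M q l p" for p
    using in_M6_card_Int_row_set_le[OF assms(6) that] assms(5) by simp
  ultimately show ?thesis
    using bound[OF adj(1)] bound[OF adj(2)] bound[OF adj(3)] by linarith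
qed

end
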